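(* Let $f:X\to X$ be a continuous map on a metric space $(X,d)$, let $K\subset X$ be compact and $\alpha\ge0$. Then $h_{\mathrm{est},\mathrm{cov}}(\alpha,K)=h_{\mathrm{est}}(\alpha,K)$.
   Context: Let $K_k:=f^k(K)$ and $f_k:=f|_{K_k}:K_k\to K_{k+1}$; write $f_0^{i}=f_{i-1}\circ\cdots\circ f_0$ and $f_0^{-i}(A)$ for the preimage of a set $A$ under $f_0^i$. A sequence $\mathcal U_\infty=(\mathcal U_k)_{k\ge0}$, where $\mathcal U_k$ is an open cover of $K_k$ (relative topology), is called $(\alpha,K)$-admissible if there is $\varepsilon>0$ with Lebesgue number $L(\mathcal U_k)\ge\varepsilon e^{-\alpha k}$ for all $k$ (the Lebesgue number being the greatest $r>0$ such that every ball of radius $r$ in $K_k$ lies in an element of $\mathcal U_k$). Set $h(f;\mathcal U_\infty)=\limsup_{n\to\infty}\frac1n\log_2\mathcal N\big(\bigvee_{i=0}^n f_0^{-i}\mathcal U_i\big)$, where $\mathcal N$ is the minimal cardinality of a finite subcover and $\bigvee$ denotes the join (all intersections $U_0\cap\cdots\cap U_n$ with $U_i$ from the $i$-th cover). Then $h_{\mathrm{est},\mathrm{cov}}(\alpha,K):=\sup h(f;\mathcal U_\infty)$ over all $(\alpha,K)$-admissible $\mathcal U_\infty$. Estimation entropy: a set $S\subset K$ is $(T,\varepsilon,\alpha,K)$-spanning ($T\in\mathbb Z_{>0}$) if for each $x\in K$ there is $y\in S$ with $d(f^t(x),f^t(y))<\varepsilon e^{-\alpha t}$ for all $t\in\{0,\ldots,T\}$;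 with $s^*_{\mathrm{est}}(T,\varepsilon,\alpha,K)$ the minimal cardinality of such a set, $h_{\mathrm{est}}(\alpha,K)=\lim_{\varepsilon\downarrow0}\limsup_{T\to\infty}\frac1T\log_2 s^*_{\mathrm{est}}(T,\varepsilon,\alpha,K)$. (Equivalently via maximal $(T,\varepsilon,\alpha,K)$-separated sets: $E\subset K$ such that distinct $x,y\in E$ satisfy $d(f^t(x),f^t(y))\ge\varepsilon e^{-\alpha t}$ for some $t\in\{0,\ldots,T\}$.) *)

theory Defs
  imports "HOL-Analysis.Analysis" "HOL-Library.Liminf_Limsup"
begin

definition Kk :: "('a \<Rightarrow> 'a) \<Rightarrow> 'a set \<Rightarrow> nat \<Rightarrow> 'a set" where
  "Kk f K k = (f ^^ k) ` K"

definition rel_open_cover :: "'a::metric_space set set \<Rightarrow> 'a set \<Rightarrow> bool" where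
  "rel_open_cover \<U> A \<longleftrightarrow> (\<forall>U\<in>\<U>. openin (top_of_set A) U) \<and> \<Union>\<U> = A"

definition lebesgue_number :: "'a::metric_space set set \<Rightarrow> 'a set \<Rightarrow> ereal" where
  "lebesgue_number \<U> A =
     Sup (ereal ` {r. r > 0 \<and> (\<forall>x\<in>A. \<exists>U\<in>\<U>. {y\<in>A. dist x y < r} \<subseteq> U)})"

definition admissible :: "('a::metric_space \<Rightarrow> 'a) \<Rightarrow> real \<Rightarrow> 'a set \<Rightarrow> (nat \<Rightarrow> 'a set set) \<Rightarrow> bool" where
  "admissible f \<alpha> K \<U> \<longleftrightarrow>
     (\<forall>k. rel_open_cover (\<U> k) (Kk f K k)) \<and>
     (\<exists>\<epsilon>>0. \<forall>k. lebesgue_number (\<U> k) (Kk f K k) \<ge> ereal (\<epsilon> * exp (- \<alpha> * real k)))"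

definition join_cover :: "('a \<Rightarrow> 'a) \<Rightarrow> 'a set \<Rightarrow> (nat \<Rightarrow> 'a set set) \<Rightarrow> nat \<Rightarrow> 'a set set" where
  "join_cover f K \<U> n =
     {{x\<in>K. \<forall>i\<le>n. (f ^^ i) x \<in> V i} | V. \<forall>i\<le>n. V i \<in> \<U> i}"

definition min_subcover :: "'a set set \<Rightarrow> 'a set \<Rightarrow> nat" where
  "min_subcover \<C> A = Inf {card \<F> | \<F>. \<F> \<subseteq> \<C> \<and> finite \<F> \<and> A \<subseteq> \<Union>\<F>}"

definition h_cov :: "('a::metric_space \<Rightarrow> 'a) \<Rightarrow> 'a set \<Rightarrow> (nat \<Rightarrow> 'a set set) \<Rightarrow> ereal" where
  "h_cov f K \<U> =
     limsup (\<lambda>n. ereal (log 2 (real (min_subcover (join_cover f K \<U> n) K)) / real n))"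

definition h_est_cov :: "('a::metric_space \<Rightarrow> 'a) \<Rightarrow> real \<Rightarrow> 'a set \<Rightarrow> ereal" where
  "h_est_cov f \<alpha> K = (SUP \<U> \<in> {\<U>. admissible f \<alpha> K \<U>}. h_cov f K \<U>)"

definition spanning :: "('a::metric_space \<Rightarrow> 'a) \<Rightarrow> nat \<Rightarrow> real \<Rightarrow> real \<Rightarrow> 'a set \<Rightarrow> 'a set \<Rightarrow> bool" where
  "spanning f T \<epsilon> \<alpha> K S \<longleftrightarrow> S \<subseteq> K \<and>
     (\<forall>x\<in>K. \<exists>y\<in>S. \<forall>t\<in>{0..T}. dist ((f ^^ t) x) ((f ^^ t) y) < \<epsilon> * exp (- \<alpha> * real t))"

definition s_est :: "('a::metric_space \<Rightarrow> 'a) \<Rightarrow> nat \<Rightarrow> real \<Rightarrow> real \<Rightarrow> 'a set \<Rightarrow> nat" where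
  "s_est f T \<epsilon> \<alpha> K = Inf {card S | S. finite S \<and> spanning f T \<epsilon> \<alpha> K S}"

definition h_est :: "('a::metric_space \<Rightarrow> 'a) \<Rightarrow> real \<Rightarrow> 'a set \<Rightarrow> ereal" where
  "h_est f \<alpha> K =
     Lim (at_right 0) (\<lambda>\<epsilon>. limsup (\<lambda>T. ereal (log 2 (real (s_est f T \<epsilon> \<alpha> K)) / real T)))"

end

theory Submission
  imports Defs
begin

text \<open>
  Given an admissible sequence of
  covers with Lebesgue numbers \<open>\<epsilon> e\<^sup>-\<^sup>\<alpha>\<^sup>k\<close>, each point of a minimal
  \<open>(T, \<epsilon>/2, \<alpha>, K)\<close>-spanning set selects one member of the join containing its whole
  Bowen-type neighbourhood, so the join has a subcover no larger than \<open>s_est T (\<epsilon>/2)\<close>.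
  Conversely, the covers by relative balls of radius \<open>\<epsilon> e\<^sup>-\<^sup>\<alpha>\<^sup>k\<close> are admissible,
  and any point picked from each member of a subcover of their join gives a
  \<open>(T, 2\<epsilon>, \<alpha>, K)\<close>-spanning set.  Since the growth rate of \<open>s_est\<close> is antitone in
  \<open>\<epsilon>\<close>, its limit as \<open>\<epsilon> \<down> 0\<close> is its supremum, and the two inequalities give equality.
\<close>

lemma continuous_on_funpow:
  fixes f :: "'a::topological_space \<Rightarrow> 'a"
  assumes "continuous_on UNIV f"
  shows "continuous_on UNIV (f ^^ n)"
proof (induction n)
  case 0
  show ?case by (simp add: continuous_on_id)
next
  case (Suc n)
  then show ?case
    using continuous_on_compose2[OF assms Suc] by simp
qed

lemma tendsto_at_right_SUP_antimono:
  fixes g :: "real \<Rightarrow> 'b::{complete_linorder, linorder_topology}"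
  assumes antimono: "\<And>x y. a < x \<Longrightarrow> x \<le> y \<Longrightarrow> g y \<le> g x"
  shows "(g \<longlongrightarrow> (SUP x\<in>{a<..}. g x)) (at_right a)"
proof (rule order_tendstoI)
  fix c assume "c < (SUP x\<in>{a<..}. g x)"
  then obtain x0 where "a < x0" "c < g x0" by (auto simp: less_SUP_iff)
  then have "c < g x" if "x \<in> {a<..<x0}" for x
    using antimono[of x x0] that by (auto intro: order.strict_trans2)
  then show "\<forall>\<^sub>F x in at_right a. c < g x"
    using eventually_at_right_real[OF \<open>a < x0\<close>] by (auto elim: eventually_mono)
next
  fix c assume "(SUP x\<in>{a<..}. g x) < c"
  then have "g x < c" if "a < x" for x
    using that by (meson SUP_upper greaterThan_iff order.strict_trans1)
  then show "\<forall>\<^sub>F x in at_right a. g x < c"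
    using eventually_at_right_less[of a] by (auto elim: eventually_mono)
qed

definition growth_rate :: "(nat \<Rightarrow> nat) \<Rightarrow> ereal" where
  "growth_rate a = limsup (\<lambda>n. ereal (log 2 (real (a n)) / real n))"

lemma growth_rate_mono:
  assumes "\<And>n. a n \<le> b n"
  shows "growth_rate a \<le> growth_rate b"
  unfolding growth_rate_def
proof (intro Limsup_mono always_eventually allI ereal_less_eq(3)[THEN iffD2] divide_right_mono)
  fix n
  show "log 2 (real (a n)) \<le> log 2 (real (b n))"
  proof (cases "a n = 0")
    case True
    then show ?thesis by (cases "b n = 0") (auto simp: log_def)
  next
    case False
    then show ?thesis using assms[of n] by simp
  qed
qed simp

lemma h_cov_eq_growth_rate:
  "h_cov f K \<U> = growth_rate (\<lambda>n. min_subcover (join_cover f K \<U> n) K)"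
  by (simp add: h_cov_def growth_rate_def)

subsection \<open>Spanning sets\<close>

lemma finite_spanning_set_exists:
  fixes f :: "'a::metric_space \<Rightarrow> 'a"
  assumes cont: "continuous_on UNIV f" and K: "compact K" and "\<epsilon> > 0"
  shows "\<exists>S. finite S \<and> spanning f T \<epsilon> \<alpha> K S"
proof -
  define B where "B y = (\<Inter>t\<in>{0..T}. (f ^^ t) -` ball ((f ^^ t) y) (\<epsilon> * exp (- \<alpha> * real t)))" for y
  have "open (B y)" for y
    unfolding B_def by (intro open_INT ballI open_vimage continuous_on_funpow[OF cont]) auto
  moreover have "K \<subseteq> (\<Union>y\<in>K. B y)"
    using \<open>\<epsilon> > 0\<close> by (auto simp: B_def)
  ultimately obtain S where S: "S \<subseteq> K" "finite S" "K \<subseteq> (\<Union>y\<in>S. B y)"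
    using compactE_image[OF K, of K B] by metis
  then have "spanning f T \<epsilon> \<alpha> K S"
    by (fastforce simp: spanning_def B_def dist_commute)
  with S show ?thesis by blast
qed

lemma s_est_le:
  assumes "finite S" "spanning f T \<epsilon> \<alpha> K S"
  shows "s_est f T \<epsilon> \<alpha> K \<le> card S"
  unfolding s_est_def by (rule cInf_lower) (use assms in auto)

lemma s_est_attained:
  fixes f :: "'a::metric_space \<Rightarrow> 'a"
  assumes "continuous_on UNIV f" "compact K" "\<epsilon> > 0"
  obtains S where "finite S" "spanning f T \<epsilon> \<alpha> K S" "card S = s_est f T \<epsilon> \<alpha> K"
proof -
  have "{card S | S. finite S \<and> spanning f T \<epsilon> \<alpha> K S} \<noteq> {}"
    using finite_spanning_set_exists[OF assms] by blast
  from Inf_nat_def1[OF this] show ?thesis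
    using that unfolding s_est_def by auto
qed

lemma s_est_antimono:
  fixes f :: "'a::metric_space \<Rightarrow> 'a"
  assumes "continuous_on UNIV f" "compact K" "0 < \<epsilon>" "\<epsilon> \<le> \<epsilon>'"
  shows "s_est f T \<epsilon>' \<alpha> K \<le> s_est f T \<epsilon> \<alpha> K"
proof -
  obtain S where S: "finite S" "spanning f T \<epsilon> \<alpha> K S" "card S = s_est f T \<epsilon> \<alpha> K"
    using s_est_attained[OF assms(1-3)] .
  have "spanning f T \<epsilon>' \<alpha> K S"
    using S(2) \<open>\<epsilon> \<le> \<epsilon>'\<close> unfolding spanning_def
    by (meson less_le_trans mult_right_mono exp_ge_zero)
  with S show ?thesis using s_est_le by metis
qed

lemma h_est_eq_SUP:
  fixes f :: "'a::metric_space \<Rightarrow> 'a"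
  assumes "continuous_on UNIV f" "compact K"
  shows "h_est f \<alpha> K = (SUP \<epsilon>\<in>{0<..}. growth_rate (\<lambda>T. s_est f T \<epsilon> \<alpha> K))"
proof -
  have "((\<lambda>\<epsilon>. growth_rate (\<lambda>T. s_est f T \<epsilon> \<alpha> K))
          \<longlongrightarrow> (SUP \<epsilon>\<in>{0<..}. growth_rate (\<lambda>T. s_est f T \<epsilon> \<alpha> K))) (at_right 0)"
    by (intro tendsto_at_right_SUP_antimono growth_rate_mono s_est_antimono[OF assms])
  then show ?thesis
    unfolding h_est_def growth_rate_def[symmetric]
    by (rule tendsto_Lim[OF trivial_limit_at_right_real])
qed

subsection \<open>Covers and their joins\<close>

lemma lebesgue_number_ge:
  assumes "r > 0" "\<And>x. x \<in> A \<Longrightarrow> \<exists>U\<in>\<U>. {y\<in>A. dist x y < r} \<subseteq> U"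
  shows "lebesgue_number \<U> A \<ge> ereal r"
  unfolding lebesgue_number_def by (rule Sup_upper) (use assms in blast)

lemma ball_subset_cover_of_lebesgue_number:
  assumes "lebesgue_number \<U> A \<ge> ereal r" "0 < s" "s < r" "x \<in> A"
  shows "\<exists>U\<in>\<U>. {y\<in>A. dist x y < s} \<subseteq> U"
proof -
  let ?R = "{r. r > 0 \<and> (\<forall>x\<in>A. \<exists>U\<in>\<U>. {y\<in>A. dist x y < r} \<subseteq> U)}"
  have "ereal s < ereal r"
    using assms(3) by simp
  also have "\<dots> \<le> Sup (ereal ` ?R)"
    using assms(1) unfolding lebesgue_number_def .
  finally obtain r' where "r' \<in> ?R" "s < r'" by (auto simp: less_Sup_iff)
  then obtain U where "U \<in> \<U>" "{y\<in>A. dist x y < r'} \<subseteq> U"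
    using \<open>x \<in> A\<close> by blast
  with \<open>s < r'\<close> show ?thesis by (intro bexI[of _ U]) auto
qed

lemma min_subcover_le:
  assumes "\<F> \<subseteq> \<C>" "finite \<F>" "A \<subseteq> \<Union>\<F>"
  shows "min_subcover \<C> A \<le> card \<F>"
  unfolding min_subcover_def by (rule cInf_lower) (use assms in auto)

lemma min_subcover_attained:
  assumes "\<exists>\<F>\<subseteq>\<C>. finite \<F> \<and> A \<subseteq> \<Union>\<F>"
  obtains \<F> where "\<F> \<subseteq> \<C>" "finite \<F>" "A \<subseteq> \<Union>\<F>" "card \<F> = min_subcover \<C> A"
proof -
  have "{card \<F> | \<F>. \<F> \<subseteq> \<C> \<and> finite \<F> \<and> A \<subseteq> \<Union>\<F>} \<noteq> {}"
    using assms by blast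
  from Inf_nat_def1[OF this] show ?thesis
    using that unfolding min_subcover_def by auto
qed

lemma join_cover_subcover_card_le_s_est:
  fixes f :: "'a::metric_space \<Rightarrow> 'a"
  assumes cont: "continuous_on UNIV f" and K: "compact K" and "\<epsilon> > 0"
    and leb: "\<And>k. lebesgue_number (\<U> k) (Kk f K k) \<ge> ereal (\<epsilon> * exp (- \<alpha> * real k))"
  shows "\<exists>\<F>\<subseteq>join_cover f K \<U> n. finite \<F> \<and> K \<subseteq> \<Union>\<F> \<and> card \<F> \<le> s_est f n (\<epsilon>/2) \<alpha> K"
proof -
  let ?r = "\<lambda>i. \<epsilon>/2 * exp (- \<alpha> * real i)"
  obtain S where S: "finite S" "spanning f n (\<epsilon>/2) \<alpha> K S" "card S = s_est f n (\<epsilon>/2) \<alpha> K"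
    using s_est_attained[OF cont K, of "\<epsilon>/2"] \<open>\<epsilon> > 0\<close> by auto
  have "\<exists>U\<in>\<U> i. {z\<in>Kk f K i. dist ((f ^^ i) y) z < ?r i} \<subseteq> U" if "y \<in> K" for y i
  proof (rule ball_subset_cover_of_lebesgue_number[OF leb])
    show "0 < ?r i" "?r i < \<epsilon> * exp (- \<alpha> * real i)"
      using \<open>\<epsilon> > 0\<close> by auto
    show "(f ^^ i) y \<in> Kk f K i"
      using that by (simp add: Kk_def)
  qed
  then obtain V where V: "\<And>y i. y \<in> K \<Longrightarrow> V y i \<in> \<U> i"
    "\<And>y i. y \<in> K \<Longrightarrow> {z\<in>Kk f K i. dist ((f ^^ i) y) z < ?r i} \<subseteq> V y i"
    by metis
  define W where "W y = {x\<in>K. \<forall>i\<le>n. (f ^^ i) x \<in> V y i}" for y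
  have "S \<subseteq> K" using S(2) by (simp add: spanning_def)
  have "W y \<in> join_cover f K \<U> n" if "y \<in> S" for y
    unfolding join_cover_def W_def
    using V(1) that \<open>S \<subseteq> K\<close> by (intro CollectI exI[of _ "V y"]) auto
  then have "W ` S \<subseteq> join_cover f K \<U> n" by blast
  moreover have "K \<subseteq> \<Union>(W ` S)"
  proof
    fix x assume "x \<in> K"
    then obtain y where y: "y \<in> S" "\<forall>t\<in>{0..n}. dist ((f ^^ t) x) ((f ^^ t) y) < ?r t"
      using S(2) by (auto simp: spanning_def)
    have "(f ^^ i) x \<in> V y i" if "i \<le> n" for i
    proof -
      have "(f ^^ i) x \<in> {z\<in>Kk f K i. dist ((f ^^ i) y) z < ?r i}"
        using y(2) that \<open>x \<in> K\<close> by (auto simp: Kk_def dist_commute)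
      then show ?thesis
        using V(2)[of y i] y(1) \<open>S \<subseteq> K\<close> by blast
    qed
    with \<open>x \<in> K\<close> y(1) show "x \<in> \<Union>(W ` S)" by (auto simp: W_def)
  qed
  moreover have "card (W ` S) \<le> s_est f n (\<epsilon>/2) \<alpha> K"
    using card_image_le[OF S(1), of W] S(3) by simp
  ultimately show ?thesis
    using S(1) by (intro exI[of _ "W ` S"]) simp
qed

lemma s_est_le_min_subcover_join:
  assumes small: "\<And>i U x y. i \<le> n \<Longrightarrow> U \<in> \<U> i \<Longrightarrow> x \<in> U \<Longrightarrow> y \<in> U
                    \<Longrightarrow> dist x y < \<delta> * exp (- \<alpha> * real i)"
    and subcover: "\<exists>\<F>\<subseteq>join_cover f K \<U> n. finite \<F> \<and> K \<subseteq> \<Union>\<F>"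
  shows "s_est f n \<delta> \<alpha> K \<le> min_subcover (join_cover f K \<U> n) K"
proof -
  obtain \<F> where F: "\<F> \<subseteq> join_cover f K \<U> n" "finite \<F>" "K \<subseteq> \<Union>\<F>"
    "card \<F> = min_subcover (join_cover f K \<U> n) K"
    using min_subcover_attained[OF subcover] .
  define \<F>' where "\<F>' = \<F> - {{}}"
  define p where "p W = (SOME x. x \<in> W)" for W :: "'a set"
  have p: "p W \<in> W" if "W \<in> \<F>'" for W
    using that unfolding \<F>'_def p_def by (auto intro: someI_ex)
  have "spanning f n \<delta> \<alpha> K (p ` \<F>')"
    unfolding spanning_def
  proof (intro conjI ballI)
    show "p ` \<F>' \<subseteq> K"
      using p F(1) by (force simp: \<F>'_def join_cover_def)
  next
    fix x assume "x \<in> K"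
    then obtain W where W: "W \<in> \<F>'" "x \<in> W" using F(3) by (auto simp: \<F>'_def)
    then obtain V where V: "W = {x\<in>K. \<forall>i\<le>n. (f ^^ i) x \<in> V i}" "\<forall>i\<le>n. V i \<in> \<U> i"
      using F(1) unfolding \<F>'_def join_cover_def by blast
    have "dist ((f ^^ t) x) ((f ^^ t) (p W)) < \<delta> * exp (- \<alpha> * real t)" if "t \<le> n" for t
      using small[OF that] V W p[OF W(1)] that by auto
    with W(1) show "\<exists>y\<in>p ` \<F>'. \<forall>t\<in>{0..n}. dist ((f ^^ t) x) ((f ^^ t) y) < \<delta> * exp (- \<alpha> * real t)"
      by (intro bexI[of _ "p W"] imageI) auto
  qed
  then have "s_est f n \<delta> \<alpha> K \<le> card (p ` \<F>')"
    using F(2) by (intro s_est_le) (auto simp: \<F>'_def)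
  also have "\<dots> \<le> card \<F>"
    using F(2) card_image_le[of \<F>' p] card_mono[of \<F> \<F>'] by (auto simp: \<F>'_def)
  finally show ?thesis using F(4) by simp
qed

subsection \<open>Covers by relative balls\<close>

definition ball_cover :: "('a::metric_space \<Rightarrow> 'a) \<Rightarrow> real \<Rightarrow> 'a set \<Rightarrow> real \<Rightarrow> nat \<Rightarrow> 'a set set" where
  "ball_cover f \<alpha> K \<epsilon> k = {Kk f K k \<inter> ball c (\<epsilon> * exp (- \<alpha> * real k)) | c. c \<in> Kk f K k}"

lemma ball_cover_member:
  "x \<in> Kk f K k \<Longrightarrow> Kk f K k \<inter> ball x (\<epsilon> * exp (- \<alpha> * real k)) \<in> ball_cover f \<alpha> K \<epsilon> k"
  unfolding ball_cover_def by blast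

lemma lebesgue_number_ball_cover:
  assumes "\<epsilon> > 0"
  shows "lebesgue_number (ball_cover f \<alpha> K \<epsilon> k) (Kk f K k) \<ge> ereal (\<epsilon> * exp (- \<alpha> * real k))"
proof (rule lebesgue_number_ge)
  fix x assume "x \<in> Kk f K k"
  then show "\<exists>U\<in>ball_cover f \<alpha> K \<epsilon> k. {y\<in>Kk f K k. dist x y < \<epsilon> * exp (- \<alpha> * real k)} \<subseteq> U"
    by (intro bexI[OF _ ball_cover_member]) auto
qed (use assms in simp)

lemma admissible_ball_cover:
  assumes "\<epsilon> > 0"
  shows "admissible f \<alpha> K (ball_cover f \<alpha> K \<epsilon>)"
proof -
  have "rel_open_cover (ball_cover f \<alpha> K \<epsilon> k) (Kk f K k)" for k
    unfolding rel_open_cover_def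
  proof (intro conjI ballI equalityI subsetI)
    fix U assume "U \<in> ball_cover f \<alpha> K \<epsilon> k"
    then show "openin (top_of_set (Kk f K k)) U"
      unfolding ball_cover_def by (auto simp: openin_open_Int)
  next
    fix x assume "x \<in> Kk f K k"
    then show "x \<in> \<Union>(ball_cover f \<alpha> K \<epsilon> k)"
      using assms by (intro UnionI[OF ball_cover_member]) auto
  qed (auto simp: ball_cover_def)
  then show ?thesis
    using lebesgue_number_ball_cover assms unfolding admissible_def by blast
qed

lemma dist_lt_in_ball_cover:
  assumes "U \<in> ball_cover f \<alpha> K \<epsilon> k" "x \<in> U" "y \<in> U"
  shows "dist x y < 2 * \<epsilon> * exp (- \<alpha> * real k)"
proof -
  obtain c where "x \<in> ball c (\<epsilon> * exp (- \<alpha> * real k))" "y \<in> ball c (\<epsilon> * exp (- \<alpha> * real k))"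
    using assms by (auto simp: ball_cover_def)
  then show ?thesis
    using dist_triangle3[of x y c] by simp
qed

lemma h_cov_le_growth_s_est:
  fixes f :: "'a::metric_space \<Rightarrow> 'a"
  assumes "continuous_on UNIV f" "compact K" "\<epsilon> > 0"
    and "\<And>k. lebesgue_number (\<U> k) (Kk f K k) \<ge> ereal (\<epsilon> * exp (- \<alpha> * real k))"
  shows "h_cov f K \<U> \<le> growth_rate (\<lambda>T. s_est f T (\<epsilon>/2) \<alpha> K)"
  unfolding h_cov_eq_growth_rate
proof (rule growth_rate_mono)
  fix n
  obtain \<F> where F: "\<F> \<subseteq> join_cover f K \<U> n" "finite \<F>" "K \<subseteq> \<Union>\<F>"
    and card: "card \<F> \<le> s_est f n (\<epsilon>/2) \<alpha> K"
    using join_cover_subcover_card_le_s_est[OF assms, of n] by blast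
  show "min_subcover (join_cover f K \<U> n) K \<le> s_est f n (\<epsilon>/2) \<alpha> K"
    using le_trans[OF min_subcover_le[OF F] card] .
qed

lemma growth_s_est_le_h_cov_ball_cover:
  fixes f :: "'a::metric_space \<Rightarrow> 'a"
  assumes "continuous_on UNIV f" "compact K" "\<epsilon> > 0"
  shows "growth_rate (\<lambda>T. s_est f T (2 * \<epsilon>) \<alpha> K) \<le> h_cov f K (ball_cover f \<alpha> K \<epsilon>)"
  unfolding h_cov_eq_growth_rate
proof (intro growth_rate_mono s_est_le_min_subcover_join)
  fix n
  have "\<exists>\<F>\<subseteq>join_cover f K (ball_cover f \<alpha> K \<epsilon>) n. finite \<F> \<and> K \<subseteq> \<Union>\<F>
          \<and> card \<F> \<le> s_est f n (\<epsilon>/2) \<alpha> K"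
    by (rule join_cover_subcover_card_le_s_est[OF assms]) (rule lebesgue_number_ball_cover[OF assms(3)])
  then show "\<exists>\<F>\<subseteq>join_cover f K (ball_cover f \<alpha> K \<epsilon>) n. finite \<F> \<and> K \<subseteq> \<Union>\<F>"
    by blast
qed (blast intro: dist_lt_in_ball_cover)

theorem mainTheorem2:
  fixes f :: "'a::metric_space \<Rightarrow> 'a" and K :: "'a set" and \<alpha> :: real
  assumes "continuous_on UNIV f" and "compact K" and "\<alpha> \<ge> 0"
  shows "h_est_cov f \<alpha> K = h_est f \<alpha> K"
  unfolding h_est_eq_SUP[OF assms(1,2)] h_est_cov_def
proof (rule antisym)
  show "(SUP \<U>\<in>{\<U>. admissible f \<alpha> K \<U>}. h_cov f K \<U>)
          \<le> (SUP \<epsilon>\<in>{0<..}. growth_rate (\<lambda>T. s_est f T \<epsilon> \<alpha> K))"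
  proof (rule SUP_least)
    fix \<U> assume "\<U> \<in> {\<U>. admissible f \<alpha> K \<U>}"
    then obtain \<epsilon> where "\<epsilon> > 0"
      and "\<And>k. lebesgue_number (\<U> k) (Kk f K k) \<ge> ereal (\<epsilon> * exp (- \<alpha> * real k))"
      by (auto simp: admissible_def)
    then show "h_cov f K \<U> \<le> (SUP \<epsilon>\<in>{0<..}. growth_rate (\<lambda>T. s_est f T \<epsilon> \<alpha> K))"
      using h_cov_le_growth_s_est[OF assms(1,2)]
      by (meson SUP_upper2 greaterThan_iff half_gt_zero)
  qed
next
  show "(SUP \<epsilon>\<in>{0<..}. growth_rate (\<lambda>T. s_est f T \<epsilon> \<alpha> K))
          \<le> (SUP \<U>\<in>{\<U>. admissible f \<alpha> K \<U>}. h_cov f K \<U>)"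
  proof (rule SUP_least)
    fix \<epsilon> :: real assume "\<epsilon> \<in> {0<..}"
    then have "growth_rate (\<lambda>T. s_est f T (2 * (\<epsilon>/2)) \<alpha> K) \<le> h_cov f K (ball_cover f \<alpha> K (\<epsilon>/2))"
      by (intro growth_s_est_le_h_cov_ball_cover[OF assms(1,2)]) simp
    moreover have "ball_cover f \<alpha> K (\<epsilon>/2) \<in> {\<U>. admissible f \<alpha> K \<U>}"
      using \<open>\<epsilon> \<in> {0<..}\<close> by (simp add: admissible_ball_cover)
    ultimately show "growth_rate (\<lambda>T. s_est f T \<epsilon> \<alpha> K) \<le> (SUP \<U>\<in>{\<U>. admissible f \<alpha> K \<U>}. h_cov f K \<U>)"
      by (simp add: SUP_upper2)
  qed
qed

end
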